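(* Let $R_1, Q_1,\dots,Q_s\in\mathbb{P}^1$ with $Q_1,\dots,Q_s$ distinct, let $P_{1j}=R_1\times Q_j$, and let $Z=\{(P_{11};m_{11}),\dots,(P_{1s};m_{1s})\}$ be a fat point scheme (so its support lies on the line defined by a form of degree $(1,0)$). Let $m=\max_j m_{1j}$ and for $h=0,\dots,m-1$ put $a_h=\sum_{j=1}^s (m_{1j}-h)_+$, where $(n)_+=\max\{0,n\}$. Then for all $(i,j)\in\mathbb{N}^2$, $$H_Z(i,j)=\sum_{h=0}^{\min\{i,\,m-1\}}\min\{j+1,\,a_h\}.$$ (Equivalently, written as a matrix with rows indexed by $i$ and columns by $j$, $H_Z$ is the sum over $h=0,\dots,m-1$ of the matrix that is zero in rows $0,\dots,h-1$ and whose every row $i\ge h$ is $(1,2,\dots,a_h-1,a_h,a_h,\dots)$.)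
   Context: $\mathbf{k}$ is algebraically closed, $R=\mathbf{k}[x_0,x_1,y_0,y_1]$ bigraded with $\deg x_i=(1,0)$, $\deg y_i=(0,1)$. A point $P=[a_0:a_1]\times[b_0:b_1]$ has ideal $\wp_P=(a_1x_0-a_0x_1,b_1y_0-b_0y_1)$; a fat point scheme $Z=\{(P_1;m_1),\dots,(P_s;m_s)\}$ (distinct points, positive integers $m_i$) has ideal $I_Z=\bigcap\wp_{P_i}^{m_i}$ and Hilbert function $H_Z(i,j)=\dim_{\mathbf{k}}(R/I_Z)_{(i,j)}$. *)

theory Defs
  imports "HOL-Computational_Algebra.Polynomial" "HOL-Library.Poly_Mapping"
begin

text \<open>Polynomials in the variables x0 = V 0, x1 = V 1, y0 = V 2, y1 = V 3 over a field 'k,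
  represented as finitely supported maps from monomials (exponent vectors) to coefficients.\<close>

type_synonym 'k mpoly4 = "(nat \<Rightarrow>\<^sub>0 nat) \<Rightarrow>\<^sub>0 'k"

definition V :: "nat \<Rightarrow> 'k::comm_ring_1 mpoly4" where
  "V n = Poly_Mapping.single (Poly_Mapping.single n 1) 1"

definition const4 :: "'k::comm_ring_1 \<Rightarrow> 'k mpoly4" where
  "const4 c = Poly_Mapping.single 0 c"

definition scale4 :: "'k::field \<Rightarrow> 'k mpoly4 \<Rightarrow> 'k mpoly4" where
  "scale4 c F = const4 c * F"

definition bihom :: "nat \<Rightarrow> nat \<Rightarrow> 'k::comm_ring_1 mpoly4 set" where
  "bihom i j = {F. \<forall>e \<in> Poly_Mapping.keys F. Poly_Mapping.keys e \<subseteq> {0,1,2,3} \<and>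
        Poly_Mapping.lookup e 0 + Poly_Mapping.lookup e 1 = i \<and> Poly_Mapping.lookup e 2 + Poly_Mapping.lookup e 3 = j}"

definition R4 :: "'k::comm_ring_1 mpoly4 set" where
  "R4 = {F. \<forall>e \<in> Poly_Mapping.keys F. Poly_Mapping.keys e \<subseteq> {0,1,2,3}}"

definition ideal_gen :: "'k::comm_ring_1 mpoly4 set \<Rightarrow> 'k mpoly4 set" where
  "ideal_gen S = {F. \<exists>T G. finite T \<and> T \<subseteq> S \<and>
        (\<forall>t\<in>T. G t \<in> R4) \<and> F = (\<Sum>t\<in>T. G t * t)}"

definition ideal_pow :: "'k::comm_ring_1 mpoly4 set \<Rightarrow> nat \<Rightarrow> 'k mpoly4 set" where
  "ideal_pow I m = ideal_gen {prod_list fs | fs. length fs = m \<and> set fs \<subseteq> I}"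

text \<open>A point of P^1 x P^1 is given by homogeneous coordinates ((a0,a1),(b0,b1)),
  with (a0,a1) and (b0,b1) nonzero.  Its ideal is (a1 x0 - a0 x1, b1 y0 - b0 y1).\<close>
definition pt_ideal :: "('k::comm_ring_1 \<times> 'k) \<times> ('k \<times> 'k) \<Rightarrow> 'k mpoly4 set" where
  "pt_ideal P = (case P of ((a0,a1),(b0,b1)) \<Rightarrow>
     ideal_gen {const4 a1 * V 0 - const4 a0 * V 1, const4 b1 * V 2 - const4 b0 * V 3})"

definition proj_pt :: "'k::field \<times> 'k \<Rightarrow> bool" where
  "proj_pt a \<longleftrightarrow> a \<noteq> (0,0)"

text \<open>Equality of points of P^1 (proportional homogeneous coordinates).\<close>
definition proj_eq :: "'k::field \<times> 'k \<Rightarrow> 'k \<times> 'k \<Rightarrow> bool" where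
  "proj_eq a b \<longleftrightarrow> fst a * snd b = snd a * fst b"

definition fat_ideal :: "nat \<Rightarrow> (nat \<Rightarrow> ('k::comm_ring_1 \<times> 'k) \<times> ('k \<times> 'k)) \<Rightarrow> (nat \<Rightarrow> nat) \<Rightarrow> 'k mpoly4 set" where
  "fat_ideal s P m = R4 \<inter> (\<Inter>k\<in>{..<s}. ideal_pow (pt_ideal (P k)) (m k))"

text \<open>Hilbert function H_Z(i,j) = dim_k (R/I_Z)_(i,j) = dim_k R_(i,j) - dim_k (I_Z)_(i,j)
  (I_Z is bihomogeneous, so (R/I_Z)_(i,j) = R_(i,j) / (I_Z \<inter> R_(i,j))).\<close>
definition hilb_fat :: "nat \<Rightarrow> (nat \<Rightarrow> ('k::field \<times> 'k) \<times> ('k \<times> 'k)) \<Rightarrow> (nat \<Rightarrow> nat) \<Rightarrow> nat \<Rightarrow> nat \<Rightarrow> nat" where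
  "hilb_fat s P m i j = vector_space.dim (scale4 :: 'k \<Rightarrow> _) (bihom i j) - vector_space.dim (scale4 :: 'k \<Rightarrow> _) (fat_ideal s P m \<inter> bihom i j)"

end

theory Submission
  imports Defs
begin

text \<open>
  Dehomogenise in the affine chart with coordinates X, Y centred at R1 x (0:1). A form F of
  bidegree (i,j) becomes sum_{k <= i} p_k(Y) X^k with deg p_k <= j, and F is determined by it.
  In the chart centred at R1 x Q_l the m-th power of the ideal of that point goes into (X,Y)^m.
  Hence for F in I_Z the coefficient p_k, read as a binary form of degree j, is divisible by the
  (m_l - k)_+ -th power of the linear form of Q_l, for every l. As the Q_l are distinct, these
  linear forms are pairwise comaximal, so p_k is divisible by their product G_k, a form of
  degree a_k. Conversely the products X^k X'^(i-k) G_k y0^q y1^(j-a_k-q) lie in I_Z, so they form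
  a basis of (I_Z)_(i,j). Its dimension is sum_{k <= i} (j + 1 - a_k)_+, and subtracting it from
  (i+1)(j+1) leaves sum_{k <= i} min (j+1) a_k.
\<close>

section \<open>Evaluating polynomials in four variables\<close>

lemma const4_mult: "const4 (a * b) = const4 a * (const4 b :: 'k::comm_ring_1 mpoly4)"
  by (simp add: const4_def mult_single)

lemma const4_add: "const4 (a + b) = const4 a + (const4 b :: 'k::comm_ring_1 mpoly4)"
  by (simp add: const4_def single_add)

lemma const4_one [simp]: "const4 1 = (1 :: 'k::comm_ring_1 mpoly4)"
  by (simp add: const4_def)

lemma const4_zero [simp]: "const4 0 = (0 :: 'k::comm_ring_1 mpoly4)"
  by (simp add: const4_def)

interpretation mpoly4: vector_space "scale4 :: 'k::field \<Rightarrow> 'k mpoly4 \<Rightarrow> 'k mpoly4"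
  by unfold_locales (simp_all add: scale4_def const4_add const4_mult algebra_simps)

lemma poly_mapping_sum_single:
  "F = (\<Sum>e\<in>Poly_Mapping.keys F. Poly_Mapping.single e (Poly_Mapping.lookup F e))"
  by (rule poly_mapping_eqI) (simp add: lookup_sum lookup_single when_def in_keys_iff)

text \<open>Polynomials are evaluated in \<open>'k poly poly\<close>, read as \<open>k[Y][X]\<close>: the outer variable is \<open>X\<close>,
  the inner one \<open>Y\<close>.\<close>

definition eval4_monom :: "(nat \<Rightarrow> 'k::field poly poly) \<Rightarrow> (nat \<Rightarrow>\<^sub>0 nat) \<Rightarrow> 'k poly poly" where
  "eval4_monom \<sigma> e = (\<Prod>n\<in>Poly_Mapping.keys e. \<sigma> n ^ Poly_Mapping.lookup e n)"

definition eval4 :: "(nat \<Rightarrow> 'k::field poly poly) \<Rightarrow> 'k mpoly4 \<Rightarrow> 'k poly poly" where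
  "eval4 \<sigma> F = (\<Sum>e\<in>Poly_Mapping.keys F. [:[:Poly_Mapping.lookup F e:]:] * eval4_monom \<sigma> e)"

lemma eval4_monom_superset:
  assumes "finite S" "Poly_Mapping.keys e \<subseteq> S"
  shows "eval4_monom \<sigma> e = (\<Prod>n\<in>S. \<sigma> n ^ Poly_Mapping.lookup e n)"
  unfolding eval4_monom_def
  by (rule prod.mono_neutral_left) (use assms in \<open>auto simp: in_keys_iff\<close>)

lemma eval4_monom_add: "eval4_monom \<sigma> (e + f) = eval4_monom \<sigma> e * eval4_monom \<sigma> f"
proof -
  let ?S = "Poly_Mapping.keys e \<union> Poly_Mapping.keys f"
  have fin: "finite ?S" by simp
  have "eval4_monom \<sigma> (e + f) = (\<Prod>n\<in>?S. \<sigma> n ^ Poly_Mapping.lookup (e + f) n)"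
    by (rule eval4_monom_superset[OF fin]) (rule keys_add)
  also have "\<dots> = (\<Prod>n\<in>?S. \<sigma> n ^ Poly_Mapping.lookup e n * \<sigma> n ^ Poly_Mapping.lookup f n)"
    by (simp add: lookup_add power_add)
  also have "\<dots> = eval4_monom \<sigma> e * eval4_monom \<sigma> f"
    by (simp add: prod.distrib eval4_monom_superset[OF fin])
  finally show ?thesis .
qed

lemma smult_const_add_left: "smult [:a + b:] p = smult [:a:] p + smult [:b::'a::comm_ring_1:] p"
  by (metis add_pCons add_0_left smult_add_left)

lemma eval4_superset:
  assumes "finite S" "Poly_Mapping.keys F \<subseteq> S"
  shows "eval4 \<sigma> F = (\<Sum>e\<in>S. [:[:Poly_Mapping.lookup F e:]:] * eval4_monom \<sigma> e)"
  unfolding eval4_def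
  by (rule sum.mono_neutral_left) (use assms in \<open>auto simp: in_keys_iff\<close>)

lemma eval4_zero [simp]: "eval4 \<sigma> 0 = 0"
  by (simp add: eval4_def)

lemma eval4_add: "eval4 \<sigma> (F + G) = eval4 \<sigma> F + eval4 \<sigma> G"
proof -
  let ?S = "Poly_Mapping.keys F \<union> Poly_Mapping.keys G"
  have fin: "finite ?S" by simp
  have "eval4 \<sigma> (F + G) = (\<Sum>e\<in>?S. [:[:Poly_Mapping.lookup (F + G) e:]:] * eval4_monom \<sigma> e)"
    by (rule eval4_superset[OF fin]) (rule keys_add)
  also have "\<dots> = eval4 \<sigma> F + eval4 \<sigma> G"
    by (simp add: eval4_superset[OF fin] lookup_add sum.distrib smult_const_add_left)
  finally show ?thesis .
qed

lemma eval4_diff: "eval4 \<sigma> (F - G) = eval4 \<sigma> F - eval4 \<sigma> G"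
  using eval4_add[of \<sigma> "F - G" G] by (simp add: eq_diff_eq)

lemma eval4_sum: "eval4 \<sigma> (\<Sum>x\<in>A. f x) = (\<Sum>x\<in>A. eval4 \<sigma> (f x))"
  by (induction A rule: infinite_finite_induct) (auto simp: eval4_add)

lemma eval4_single: "eval4 \<sigma> (Poly_Mapping.single e c) = [:[:c:]:] * eval4_monom \<sigma> e"
  by (simp add: eval4_def)

lemma eval4_mult: "eval4 \<sigma> (F * G) = eval4 \<sigma> F * eval4 \<sigma> G"
proof -
  have "F * G = (\<Sum>e\<in>Poly_Mapping.keys F. Poly_Mapping.single e (Poly_Mapping.lookup F e)) *
                (\<Sum>f\<in>Poly_Mapping.keys G. Poly_Mapping.single f (Poly_Mapping.lookup G f))"
    using poly_mapping_sum_single[of F] poly_mapping_sum_single[of G] by simp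
  also have "\<dots> = (\<Sum>e\<in>Poly_Mapping.keys F. \<Sum>f\<in>Poly_Mapping.keys G.
       Poly_Mapping.single (e + f) (Poly_Mapping.lookup F e * Poly_Mapping.lookup G f))"
    by (simp add: sum_distrib_left sum_distrib_right mult_single) (rule sum.swap)
  finally have "eval4 \<sigma> (F * G) = (\<Sum>e\<in>Poly_Mapping.keys F. \<Sum>f\<in>Poly_Mapping.keys G.
       [:[:Poly_Mapping.lookup F e:]:] * eval4_monom \<sigma> e * ([:[:Poly_Mapping.lookup G f:]:] * eval4_monom \<sigma> f))"
    by (simp add: eval4_sum eval4_single eval4_monom_add mult_ac)
  also have "\<dots> = eval4 \<sigma> F * eval4 \<sigma> G"
    unfolding eval4_def sum_product by (intro sum.cong refl; simp only: mult_ac)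
  finally show ?thesis .
qed

lemma eval4_const4: "eval4 \<sigma> (const4 c) = [:[:c:]:]"
  by (simp add: const4_def eval4_single eval4_monom_def)

lemma eval4_one [simp]: "eval4 \<sigma> 1 = 1"
  using eval4_const4[of \<sigma> 1] by (simp add: one_pCons)

lemma eval4_V: "eval4 \<sigma> (V n) = \<sigma> n"
  by (simp add: V_def eval4_single eval4_monom_def flip: one_pCons)

lemma eval4_scale4: "eval4 \<sigma> (scale4 c F) = [:[:c:]:] * eval4 \<sigma> F"
  by (simp add: scale4_def eval4_mult eval4_const4)

lemma eval4_power: "eval4 \<sigma> (F ^ n) = eval4 \<sigma> F ^ n"
  by (induction n) (simp_all add: eval4_mult)

lemma eval4_prod: "eval4 \<sigma> (\<Prod>x\<in>A. f x) = (\<Prod>x\<in>A. eval4 \<sigma> (f x))"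
  by (induction A rule: infinite_finite_induct)
    (auto simp: eval4_mult)

lemma eval4_prod_list: "eval4 \<sigma> (prod_list fs) = prod_list (map (eval4 \<sigma>) fs)"
  by (induction fs) (simp_all add: eval4_mult)

lemma eval4_sum_scale4:
  "eval4 \<sigma> (\<Sum>x\<in>A. scale4 (u x) (f x)) = (\<Sum>x\<in>A. [:[:u x:]:] * eval4 \<sigma> (f x))"
  by (simp add: eval4_sum eval4_scale4)

section \<open>The grading\<close>

lemma keys_add_nat:
  "Poly_Mapping.keys (a + b :: nat \<Rightarrow>\<^sub>0 nat) = Poly_Mapping.keys a \<union> Poly_Mapping.keys b"
  by (auto simp: in_keys_iff lookup_add)

lemma R4_add: "F \<in> R4 \<Longrightarrow> G \<in> R4 \<Longrightarrow> F + G \<in> R4"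
  unfolding R4_def using keys_add[of F G] by blast

lemma R4_mult: "F \<in> R4 \<Longrightarrow> G \<in> R4 \<Longrightarrow> F * G \<in> R4"
  unfolding R4_def using keys_mult[of F G] by (fastforce simp: keys_add_nat)

lemma R4_zero: "0 \<in> R4"
  by (simp add: R4_def)

lemma R4_one [simp]: "1 \<in> R4"
  by (simp add: R4_def)

lemma R4_V: "n \<le> 3 \<Longrightarrow> V n \<in> R4"
  by (auto simp: R4_def V_def)

lemma R4_power: "F \<in> R4 \<Longrightarrow> F ^ n \<in> R4"
  by (induction n) (simp_all add: R4_mult)

lemma R4_prod: "(\<And>x. x \<in> A \<Longrightarrow> f x \<in> R4) \<Longrightarrow> (\<Prod>x\<in>A. f x) \<in> R4"
  by (induction A rule: infinite_finite_induct) (auto simp: R4_mult)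

lemma R4_sum: "(\<And>x. x \<in> A \<Longrightarrow> f x \<in> R4) \<Longrightarrow> (\<Sum>x\<in>A. f x) \<in> R4"
  by (induction A rule: infinite_finite_induct) (auto simp: R4_add R4_zero)

lemma R4_prod_list: "set fs \<subseteq> R4 \<Longrightarrow> prod_list fs \<in> R4"
  by (induction fs) (auto simp: R4_mult)

lemma bihom_subset_R4: "bihom i j \<subseteq> R4"
  by (auto simp: bihom_def R4_def)

lemma bihom_zero [simp]: "0 \<in> bihom i j"
  by (simp add: bihom_def)

lemma bihom_add: "F \<in> bihom i j \<Longrightarrow> G \<in> bihom i j \<Longrightarrow> F + G \<in> bihom i j"
  unfolding bihom_def using keys_add[of F G] by blast

lemma bihom_mult: "F \<in> bihom i j \<Longrightarrow> G \<in> bihom i' j' \<Longrightarrow> F * G \<in> bihom (i + i') (j + j')"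
  unfolding bihom_def using keys_mult[of F G] by (fastforce simp: keys_add_nat lookup_add)

lemma bihom_diff: "F \<in> bihom i j \<Longrightarrow> G \<in> bihom i j \<Longrightarrow> F - G \<in> bihom i j"
  using bihom_add[of F i j "- G"] by (simp add: bihom_def keys_minus)

lemma bihom_const4 [simp]: "const4 c \<in> bihom 0 0"
  by (simp add: bihom_def const4_def)

lemma bihom_one [simp]: "1 \<in> bihom 0 0"
  using bihom_const4[of 1] by simp

lemma bihom_const4_mult: "F \<in> bihom i j \<Longrightarrow> const4 c * F \<in> bihom i j"
  using bihom_mult[OF bihom_const4[of c], of F i j] by simp

lemma bihom_scale4: "F \<in> bihom i j \<Longrightarrow> scale4 c F \<in> bihom i j"
  unfolding scale4_def by (rule bihom_const4_mult)

lemma bihom_V_x: "n \<in> {0, 1} \<Longrightarrow> V n \<in> bihom 1 0"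
  by (auto simp: bihom_def V_def lookup_single when_def)

lemma bihom_V_y: "n \<in> {2, 3} \<Longrightarrow> V n \<in> bihom 0 1"
  by (auto simp: bihom_def V_def lookup_single when_def)

lemma bihom_power: "F \<in> bihom i j \<Longrightarrow> F ^ n \<in> bihom (n * i) (n * j)"
  by (induction n) (simp_all add: bihom_mult)

lemma bihom_sum: "(\<And>x. x \<in> A \<Longrightarrow> f x \<in> bihom i j) \<Longrightarrow> (\<Sum>x\<in>A. f x) \<in> bihom i j"
  by (induction A rule: infinite_finite_induct) (auto simp: bihom_add)

lemma bihom_prod:
  "(\<And>x. x \<in> A \<Longrightarrow> f x \<in> bihom 0 (g x)) \<Longrightarrow> (\<Prod>x\<in>A. f x) \<in> bihom 0 (\<Sum>x\<in>A. g x)"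
proof (induction A rule: infinite_finite_induct)
  case (insert x F)
  have "f x * prod f F \<in> bihom (0 + 0) (g x + sum g F)"
    by (rule bihom_mult) (use insert in auto)
  then show ?case using insert by simp
qed auto

section \<open>Ideals\<close>

lemma ideal_gen_base: "t \<in> S \<Longrightarrow> t \<in> ideal_gen S"
  unfolding ideal_gen_def by (intro CollectI exI[of _ "{t}"] exI[of _ "\<lambda>_. 1"]) auto

lemma ideal_gen_mult:
  assumes "F \<in> ideal_gen S" "r \<in> R4"
  shows "r * F \<in> ideal_gen S"
proof -
  obtain T G where T: "finite T" "T \<subseteq> S" and G: "\<forall>t\<in>T. G t \<in> R4"
    and F: "F = (\<Sum>t\<in>T. G t * t)"
    using assms(1) unfolding ideal_gen_def by blast
  have "r * F = (\<Sum>t\<in>T. (r * G t) * t)"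
    unfolding F by (simp add: sum_distrib_left mult_ac)
  moreover have "\<forall>t\<in>T. r * G t \<in> R4"
    using G assms(2) by (simp add: R4_mult)
  ultimately show ?thesis
    using T unfolding ideal_gen_def by (intro CollectI exI[of _ T] exI[of _ "\<lambda>t. r * G t"]) simp
qed

lemma ideal_gen_subset_R4: "S \<subseteq> R4 \<Longrightarrow> ideal_gen S \<subseteq> R4"
  unfolding ideal_gen_def by (auto intro!: R4_sum R4_mult)

lemma eval4_ideal_gen:
  assumes "F \<in> ideal_gen S"
    and "0 \<in> J" and J_add: "\<And>p q. p \<in> J \<Longrightarrow> q \<in> J \<Longrightarrow> p + q \<in> J"
    and J_mult: "\<And>p q. q \<in> J \<Longrightarrow> p * q \<in> J"
    and S_J: "\<And>t. t \<in> S \<Longrightarrow> eval4 \<sigma> t \<in> J"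
  shows "eval4 \<sigma> F \<in> J"
proof -
  obtain T G where T: "finite T" "T \<subseteq> S" and F: "F = (\<Sum>t\<in>T. G t * t)"
    using assms(1) unfolding ideal_gen_def by blast
  have "(\<Sum>t\<in>T. eval4 \<sigma> (G t) * eval4 \<sigma> t) \<in> J"
    using T by (induction T rule: finite_induct) (auto intro: \<open>0 \<in> J\<close> J_add J_mult S_J)
  then show ?thesis
    unfolding F eval4_sum eval4_mult .
qed

lemma prod_list_in_ideal_pow:
  assumes "set fs \<subseteq> I" "I \<subseteq> R4" "m \<le> length fs"
  shows "prod_list fs \<in> ideal_pow I m"
proof -
  have "prod_list fs = prod_list (drop m fs) * prod_list (take m fs)"
    by (metis append_take_drop_id mult.commute prod_list.append)
  moreover have "prod_list (take m fs) \<in> ideal_pow I m"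
    unfolding ideal_pow_def
    by (rule ideal_gen_base, intro CollectI exI[of _ "take m fs"]) (use assms in \<open>auto dest: in_set_takeD\<close>)
  moreover have "prod_list (drop m fs) \<in> R4"
    using assms by (intro R4_prod_list) (auto dest: in_set_dropD)
  ultimately show ?thesis
    unfolding ideal_pow_def by (simp add: ideal_gen_mult)
qed

lemma power_mult_power_in_ideal_pow:
  assumes "x \<in> I" "y \<in> I" "I \<subseteq> R4" "m \<le> k + e"
  shows "x ^ k * y ^ e \<in> ideal_pow I m"
proof -
  have "x ^ k * y ^ e = prod_list (replicate k x @ replicate e y)"
    by simp
  also have "\<dots> \<in> ideal_pow I m"
    by (rule prod_list_in_ideal_pow) (use assms in auto)
  finally show ?thesis .
qed

section \<open>Powers of the ideal of the origin in \<open>k[Y][X]\<close>\<close>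

definition origin_ideal_pow :: "nat \<Rightarrow> 'k::field poly poly set" where
  "origin_ideal_pow m = {p. \<forall>\<alpha> \<beta>. \<alpha> + \<beta> < m \<longrightarrow> coeff (coeff p \<alpha>) \<beta> = 0}"

lemma origin_ideal_pow_mult:
  assumes "p \<in> origin_ideal_pow a" "q \<in> origin_ideal_pow b"
  shows "p * q \<in> origin_ideal_pow (a + b)"
  unfolding origin_ideal_pow_def
proof (intro CollectI allI impI)
  fix \<alpha> \<beta> assume lt: "\<alpha> + \<beta> < a + b"
  have "coeff (coeff (p * q) \<alpha>) \<beta> =
      (\<Sum>i\<le>\<alpha>. \<Sum>k\<le>\<beta>. coeff (coeff p i) k * coeff (coeff q (\<alpha> - i)) (\<beta> - k))"
    by (simp add: coeff_mult coeff_sum)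
  also have "\<dots> = 0"
  proof (intro sum.neutral ballI)
    fix i k assume ik: "i \<in> {..\<alpha>}" "k \<in> {..\<beta>}"
    show "coeff (coeff p i) k * coeff (coeff q (\<alpha> - i)) (\<beta> - k) = 0"
    proof (cases "i + k < a")
      case True
      then show ?thesis using assms(1) by (simp add: origin_ideal_pow_def)
    next
      case False
      then have "(\<alpha> - i) + (\<beta> - k) < b" using lt ik by auto
      then show ?thesis using assms(2) by (simp add: origin_ideal_pow_def)
    qed
  qed
  finally show "coeff (coeff (p * q) \<alpha>) \<beta> = 0" .
qed

lemma origin_ideal_pow_0 [simp]: "p \<in> origin_ideal_pow 0"
  by (simp add: origin_ideal_pow_def)

lemma origin_ideal_pow_mult_left: "q \<in> origin_ideal_pow b \<Longrightarrow> p * q \<in> origin_ideal_pow b"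
  using origin_ideal_pow_mult[of p 0 q b] by simp

lemma origin_ideal_pow_add:
  "p \<in> origin_ideal_pow a \<Longrightarrow> q \<in> origin_ideal_pow a \<Longrightarrow> p + q \<in> origin_ideal_pow a"
  by (simp add: origin_ideal_pow_def)

lemma zero_in_origin_ideal_pow: "0 \<in> origin_ideal_pow a"
  by (simp add: origin_ideal_pow_def)

lemma prod_list_in_origin_ideal_pow:
  "set fs \<subseteq> origin_ideal_pow 1 \<Longrightarrow> prod_list fs \<in> origin_ideal_pow (length fs)"
  by (induction fs) (auto dest: origin_ideal_pow_mult)

definition varX :: "'k::field poly poly" where
  "varX = [:0, 1:]"

definition varY :: "'k::field poly poly" where
  "varY = [:[:0, 1:]:]"

lemma varX_in_origin_ideal_pow: "varX \<in> origin_ideal_pow (Suc 0)"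
  by (simp add: origin_ideal_pow_def varX_def)

lemma varY_in_origin_ideal_pow: "varY \<in> origin_ideal_pow (Suc 0)"
  by (simp add: origin_ideal_pow_def varY_def)

lemma varX_power: "varX ^ n = monom 1 n"
  by (simp add: varX_def monom_altdef)

lemma varY_power: "varY ^ n = [:monom 1 n:]"
  by (simp add: varY_def poly_const_pow monom_altdef)

lemma coeff_coeff_sum_monom_monom:
  assumes "finite T"
  shows "coeff (coeff (\<Sum>t\<in>T. monom (monom (c t) (snd t)) (fst t)) \<alpha>) \<beta> =
    (if (\<alpha>, \<beta>) \<in> T then c (\<alpha>, \<beta>) else 0)"
proof -
  have "coeff (coeff (monom (monom (c t) (snd t)) (fst t)) \<alpha>) \<beta> = (if t = (\<alpha>, \<beta>) then c t else 0)"
    for t by (auto simp: coeff_monom)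
  then show ?thesis
    unfolding coeff_sum using assms by (simp add: sum.delta')
qed

lemma smult_const_monom_mult_monom:
  "smult [:u:] (monom (g * monom 1 q) k) = monom (g * monom (u::'k::field) q) k"
proof -
  have "g * monom u q = smult u (g * monom 1 q)"
    by (metis mult_smult_right smult_monom mult.right_neutral)
  then show ?thesis by (simp add: smult_monom)
qed

lemma monom_mult_const: "monom 1 \<alpha> * [:q:] = monom (q::'k::field poly) \<alpha>"
  by (simp add: monom_0[symmetric] mult_monom)

section \<open>Affine charts of \<open>\<P>\<^sup>1 \<times> \<P>\<^sup>1\<close>\<close>

definition compl_pt :: "'k::field \<times> 'k \<Rightarrow> 'k \<times> 'k" where
  "compl_pt a = (if snd a \<noteq> 0 then (0, 1 / snd a) else (1 / fst a, 0))"

lemma compl_pt_det: "a \<noteq> (0, 0) \<Longrightarrow> snd a * snd (compl_pt a) + fst a * fst (compl_pt a) = 1"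
  by (cases a) (auto simp: compl_pt_def)

definition xform :: "'k::field \<times> 'k \<Rightarrow> 'k mpoly4" where
  "xform a = const4 (snd a) * V 0 - const4 (fst a) * V 1"

definition xform_compl :: "'k::field \<times> 'k \<Rightarrow> 'k mpoly4" where
  "xform_compl a = const4 (fst (compl_pt a)) * V 0 + const4 (snd (compl_pt a)) * V 1"

definition yform :: "'k::field \<times> 'k \<Rightarrow> 'k mpoly4" where
  "yform b = const4 (snd b) * V 2 - const4 (fst b) * V 3"

definition yform_compl :: "'k::field \<times> 'k \<Rightarrow> 'k mpoly4" where
  "yform_compl b = const4 (fst (compl_pt b)) * V 2 + const4 (snd (compl_pt b)) * V 3"

lemma pt_ideal_eq: "pt_ideal (a, b) = ideal_gen {xform a, yform b}"
  by (cases a; cases b) (simp add: pt_ideal_def xform_def yform_def)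

lemma bihom_xform: "xform a \<in> bihom 1 0"
  unfolding xform_def by (intro bihom_diff bihom_const4_mult bihom_V_x) simp_all

lemma bihom_xform_compl: "xform_compl a \<in> bihom 1 0"
  unfolding xform_compl_def by (intro bihom_add bihom_const4_mult bihom_V_x) simp_all

lemma bihom_yform: "yform b \<in> bihom 0 1"
  unfolding yform_def by (intro bihom_diff bihom_const4_mult bihom_V_y) simp_all

lemma bihom_yform_compl: "yform_compl b \<in> bihom 0 1"
  unfolding yform_compl_def by (intro bihom_add bihom_const4_mult bihom_V_y) simp_all

lemma pt_ideal_subset_R4:
  fixes a b :: "'k::field \<times> 'k"
  shows "pt_ideal (a, b) \<subseteq> R4"
  unfolding pt_ideal_eq
  by (rule ideal_gen_subset_R4) (use bihom_xform bihom_yform bihom_subset_R4 in blast)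

text \<open>With \<open>c = compl_pt a\<close> and \<open>d = compl_pt b\<close>, the substitution \<open>x = a + X (c\<^sub>1, -c\<^sub>0)\<close>,
  \<open>y = b + Y (d\<^sub>1, -d\<^sub>0)\<close>: the affine chart centred at \<open>a \<times> b\<close>. It sends \<open>xform a\<close>,
  \<open>xform_compl a\<close>, \<open>yform b\<close>, \<open>yform_compl b\<close> to \<open>X\<close>, \<open>1\<close>, \<open>Y\<close>, \<open>1\<close>.\<close>

definition chart_subst :: "'k::field \<times> 'k \<Rightarrow> 'k \<times> 'k \<Rightarrow> nat \<Rightarrow> 'k poly poly" where
  "chart_subst a b n =
    (if n = 0 then [:[:fst a:], [:snd (compl_pt a):]:]
     else if n = 1 then [:[:snd a:], [:- fst (compl_pt a):]:]
     else if n = 2 then [:[:fst b, snd (compl_pt b):]:]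
     else if n = 3 then [:[:snd b, - fst (compl_pt b):]:] else 0)"

abbreviation chart :: "'k::field \<times> 'k \<Rightarrow> 'k \<times> 'k \<Rightarrow> 'k mpoly4 \<Rightarrow> 'k poly poly" where
  "chart a b \<equiv> eval4 (chart_subst a b)"

lemma chart_xform: "a \<noteq> (0, 0) \<Longrightarrow> chart a b (xform a) = varX"
  using compl_pt_det[of a]
  by (simp add: xform_def eval4_diff eval4_mult eval4_const4 eval4_V chart_subst_def varX_def)

lemma chart_xform_compl: "a \<noteq> (0, 0) \<Longrightarrow> chart a b (xform_compl a) = 1"
  using compl_pt_det[of a]
  by (simp add: xform_compl_def eval4_add eval4_mult eval4_const4 eval4_V chart_subst_def
      one_pCons mult.commute add.commute)

lemma chart_yform:
  "chart a b (yform b') =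
    [:[:snd b' * fst b - fst b' * snd b, snd b' * snd (compl_pt b) + fst b' * fst (compl_pt b):]:]"
  by (simp add: yform_def eval4_diff eval4_mult eval4_const4 eval4_V chart_subst_def)

lemma chart_yform_compl:
  "chart a b (yform_compl b') =
    [:[:fst (compl_pt b') * fst b + snd (compl_pt b') * snd b,
        fst (compl_pt b') * snd (compl_pt b) - snd (compl_pt b') * fst (compl_pt b):]:]"
  by (simp add: yform_compl_def eval4_add eval4_mult eval4_const4 eval4_V chart_subst_def)

lemma chart_yform_self: "b \<noteq> (0, 0) \<Longrightarrow> chart a b (yform b) = varY"
  using compl_pt_det[of b] by (simp add: chart_yform varY_def mult.commute)

lemma chart_yform_compl_self: "b \<noteq> (0, 0) \<Longrightarrow> chart a b (yform_compl b) = 1"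
  using compl_pt_det[of b] by (simp add: chart_yform_compl one_pCons mult.commute add.commute)

lemma chart_ideal_pow_pt_ideal:
  assumes a: "a \<noteq> (0, 0)" and b: "b \<noteq> (0, 0)" and F: "F \<in> ideal_pow (pt_ideal (a, b)) m"
  shows "chart a b F \<in> origin_ideal_pow m"
proof -
  have generator: "chart a b f \<in> origin_ideal_pow 1" if "f \<in> pt_ideal (a, b)" for f
    using that unfolding pt_ideal_eq
    by (rule eval4_ideal_gen)
      (use a b in \<open>auto simp: zero_in_origin_ideal_pow origin_ideal_pow_add origin_ideal_pow_mult_left
        chart_xform chart_yform_self varX_in_origin_ideal_pow varY_in_origin_ideal_pow\<close>)
  show ?thesis
    using F unfolding ideal_pow_def
  proof (rule eval4_ideal_gen)
    fix t assume "t \<in> {prod_list fs |fs. length fs = m \<and> set fs \<subseteq> pt_ideal (a, b)}"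
    then obtain fs where fs: "t = prod_list fs" "length fs = m" "set fs \<subseteq> pt_ideal (a, b)"
      by blast
    have "prod_list (map (chart a b) fs) \<in> origin_ideal_pow (length (map (chart a b) fs))"
      by (rule prod_list_in_origin_ideal_pow) (use fs generator in auto)
    then show "chart a b t \<in> origin_ideal_pow m"
      using fs by (simp add: eval4_prod_list)
  qed (simp_all add: zero_in_origin_ideal_pow origin_ideal_pow_add origin_ideal_pow_mult_left)
qed

section \<open>Bases of the bigraded pieces\<close>

lemma eval4_monomial_images_coeffs_zero:
  fixes f :: "nat \<times> nat \<Rightarrow> 'k::field mpoly4"
  assumes fin: "finite T"
    and eval_f: "\<And>t. t \<in> T \<Longrightarrow> eval4 \<sigma> (f t) = monom (G (fst t) * monom 1 (snd t)) (fst t)"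
    and G_nonzero: "\<And>t. t \<in> T \<Longrightarrow> G (fst t) \<noteq> 0"
    and sum0: "(\<Sum>t\<in>T. scale4 (u t) (f t)) = 0" and t: "t \<in> T"
  shows "u t = 0"
proof -
  obtain k q where kq: "t = (k, q)" by (cases t)
  have "(\<Sum>t\<in>T. monom (G (fst t) * monom (u t) (snd t)) (fst t)) = 0"
    using arg_cong[OF sum0, of "eval4 \<sigma>"]
    by (simp add: eval4_sum_scale4 eval_f smult_const_monom_mult_monom cong: sum.cong)
  then have "coeff (\<Sum>t\<in>T. monom (G (fst t) * monom (u t) (snd t)) (fst t)) k = 0"
    by simp
  moreover have "coeff (\<Sum>t\<in>T. monom (G (fst t) * monom (u t) (snd t)) (fst t)) k
      = G k * (\<Sum>t\<in>T. if fst t = k then monom (u t) (snd t) else 0)"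
    unfolding coeff_sum coeff_monom sum_distrib_left by (intro sum.cong refl) auto
  moreover have "G k \<noteq> 0"
    using G_nonzero[OF t] kq by simp
  ultimately have "(\<Sum>t\<in>T. if fst t = k then monom (u t) (snd t) else 0) = 0"
    by simp
  then have "coeff (\<Sum>t\<in>T. if fst t = k then monom (u t) (snd t) else 0) q = 0"
    by simp
  moreover have "coeff (\<Sum>t\<in>T. if fst t = k then monom (u t) (snd t) else 0) q =
      (\<Sum>t\<in>T. if t = (k, q) then u t else 0)"
    unfolding coeff_sum by (intro sum.cong refl) (auto simp: coeff_monom)
  moreover have "\<dots> = u (k, q)"
    using fin t kq by (simp add: sum.delta')
  ultimately show ?thesis
    using kq by simp
qed

lemma independent_if_eval4_monomial_images:
  fixes f :: "nat \<times> nat \<Rightarrow> 'k::field mpoly4"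
  assumes fin: "finite T"
    and eval_f: "\<And>t. t \<in> T \<Longrightarrow> eval4 \<sigma> (f t) = monom (G (fst t) * monom 1 (snd t)) (fst t)"
    and G_nonzero: "\<And>t. t \<in> T \<Longrightarrow> G (fst t) \<noteq> 0"
  shows "inj_on f T" and "mpoly4.independent (f ` T)"
proof -
  show inj: "inj_on f T"
  proof (rule inj_onI)
    fix t1 t2 assume t: "t1 \<in> T" "t2 \<in> T" and "f t1 = f t2"
    then have "monom (G (fst t1) * monom 1 (snd t1)) (fst t1) =
        monom (G (fst t2) * monom 1 (snd t2)) (fst t2)"
      using eval_f by metis
    then show "t1 = t2"
      using G_nonzero[OF t(1)] by (auto simp: monom_eq_iff' prod_eq_iff)
  qed
  show "mpoly4.independent (f ` T)"
  proof (rule mpoly4.independent_if_scalars_zero)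
    fix g x assume sum0: "(\<Sum>x\<in>f ` T. scale4 (g x) x) = 0" and "x \<in> f ` T"
    then obtain t where t: "t \<in> T" "x = f t" by blast
    have reindexed: "(\<Sum>t\<in>T. scale4 (g (f t)) (f t)) = 0"
      using sum0 by (simp add: sum.reindex[OF inj])
    have "g (f t) = 0"
      by (rule eval4_monomial_images_coeffs_zero[where u = "\<lambda>t. g (f t)"])
        (fact fin eval_f G_nonzero reindexed t(1))+
    then show "g x = 0"
      using t by simp
  qed (use fin in simp)
qed

definition grid :: "nat \<Rightarrow> nat \<Rightarrow> (nat \<times> nat) set" where
  "grid i j = {..i} \<times> {..j}"

lemma finite_grid [simp]: "finite (grid i j)"
  by (simp add: grid_def)

lemma card_grid: "card (grid i j) = (i + 1) * (j + 1)"
  by (simp add: grid_def card_cartesian_product)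

definition chart_basis :: "'k::field \<times> 'k \<Rightarrow> 'k \<times> 'k \<Rightarrow> nat \<Rightarrow> nat \<Rightarrow> nat \<times> nat \<Rightarrow> 'k mpoly4"
  where "chart_basis a b i j t =
    xform a ^ fst t * xform_compl a ^ (i - fst t) * yform b ^ snd t * yform_compl b ^ (j - snd t)"

lemma chart_basis_bihom:
  assumes "t \<in> grid i j"
  shows "chart_basis a b i j t \<in> bihom i j"
proof -
  have "xform a ^ fst t \<in> bihom (fst t) 0" "xform_compl a ^ (i - fst t) \<in> bihom (i - fst t) 0"
    "yform b ^ snd t \<in> bihom 0 (snd t)" "yform_compl b ^ (j - snd t) \<in> bihom 0 (j - snd t)"
    using bihom_power[OF bihom_xform, of a "fst t"] bihom_power[OF bihom_xform_compl, of a "i - fst t"]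
      bihom_power[OF bihom_yform, of b "snd t"] bihom_power[OF bihom_yform_compl, of b "j - snd t"]
    by simp_all
  then have "chart_basis a b i j t \<in> bihom (fst t + (i - fst t) + 0 + 0) (0 + 0 + snd t + (j - snd t))"
    unfolding chart_basis_def by (intro bihom_mult)
  then show ?thesis
    using assms by (auto simp: grid_def)
qed

lemma chart_chart_basis:
  assumes "a \<noteq> (0, 0)" "b \<noteq> (0, 0)"
  shows "chart a b (chart_basis a b i j t) = monom (monom 1 (snd t)) (fst t)"
  using assms
  by (simp add: chart_basis_def eval4_mult eval4_power chart_xform chart_xform_compl
      chart_yform_self chart_yform_compl_self varX_power varY_power monom_mult_const smult_monom)

lemma chart_basis_independent:
  assumes "a \<noteq> (0, 0)" "b \<noteq> (0, 0)"
  shows "inj_on (chart_basis a b i j) (grid i j)"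
    and "mpoly4.independent (chart_basis a b i j ` grid i j)"
  by (rule independent_if_eval4_monomial_images[where \<sigma> = "chart_subst a b" and G = "\<lambda>_. 1"];
      simp add: chart_chart_basis assms)+

lemma V_power: "V n ^ p = (Poly_Mapping.single (Poly_Mapping.single n p) 1 :: 'k::comm_ring_1 mpoly4)"
proof (induction p)
  case (Suc p)
  have "V n ^ Suc p = Poly_Mapping.single (Poly_Mapping.single n p) 1 *
      Poly_Mapping.single (Poly_Mapping.single n 1) (1::'k)"
    using Suc by (simp add: V_def mult.commute)
  also have "\<dots> = Poly_Mapping.single (Poly_Mapping.single n (Suc p)) 1"
    by (simp add: mult_single single_add[symmetric])
  finally show ?case .
qed simp

lemma compl_pt_std: "compl_pt (0, 1::'k::field) = (0, 1)"
  by (simp add: compl_pt_def)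

lemma chart_basis_std:
  "chart_basis (0, 1::'k::field) (0, 1) i j t =
    V 0 ^ fst t * V 1 ^ (i - fst t) * V 2 ^ snd t * V 3 ^ (j - snd t)"
  by (simp add: chart_basis_def xform_def xform_compl_def yform_def yform_compl_def compl_pt_std)

lemma single_in_chart_basis_std:
  assumes F: "F \<in> bihom i j" and e: "e \<in> Poly_Mapping.keys F"
  shows "Poly_Mapping.single e (1::'k::field) \<in> chart_basis (0, 1) (0, 1) i j ` grid i j"
proof -
  let ?e = "Poly_Mapping.lookup e"
  have keys: "Poly_Mapping.keys e \<subseteq> {0, 1, 2, 3}" and i: "?e 0 + ?e 1 = i" and j: "?e 2 + ?e 3 = j"
    using F e unfolding bihom_def by blast+
  have e_eq: "e = Poly_Mapping.single 0 (?e 0) + Poly_Mapping.single 1 (?e 1)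
      + Poly_Mapping.single 2 (?e 2) + Poly_Mapping.single 3 (?e 3)"
  proof (rule poly_mapping_eqI)
    fix n
    show "?e n = Poly_Mapping.lookup (Poly_Mapping.single 0 (?e 0) + Poly_Mapping.single 1 (?e 1)
      + Poly_Mapping.single 2 (?e 2) + Poly_Mapping.single 3 (?e 3)) n"
      using keys by (cases "n \<in> {0, 1, 2, 3}") (auto simp: lookup_add lookup_single in_keys_iff)
  qed
  have "Poly_Mapping.single e (1::'k) = chart_basis (0, 1) (0, 1) i j (?e 0, ?e 2)"
    unfolding chart_basis_std fst_conv snd_conv V_power mult_single
    using i j by (subst e_eq) (simp flip: i j)
  moreover have "(?e 0, ?e 2) \<in> grid i j"
    using i j by (auto simp: grid_def)
  ultimately show ?thesis
    by blast
qed

lemma bihom_subset_span_chart_basis_std: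
  "bihom i j \<subseteq> mpoly4.span (chart_basis (0, 1::'k::field) (0, 1) i j ` grid i j)"
proof
  fix F :: "'k mpoly4" assume F: "F \<in> bihom i j"
  have "F = (\<Sum>e\<in>Poly_Mapping.keys F. scale4 (Poly_Mapping.lookup F e) (Poly_Mapping.single e 1))"
    by (subst poly_mapping_sum_single) (simp add: scale4_def const4_def mult_single)
  also have "\<dots> \<in> mpoly4.span (chart_basis (0, 1) (0, 1) i j ` grid i j)"
    by (intro mpoly4.span_sum mpoly4.span_scale mpoly4.span_base single_in_chart_basis_std[OF F])
  finally show "F \<in> mpoly4.span (chart_basis (0, 1) (0, 1) i j ` grid i j)" .
qed

lemma dim_bihom: "mpoly4.dim (bihom i j :: 'k::field mpoly4 set) = (i + 1) * (j + 1)"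
proof -
  have std: "(0, 1::'k) \<noteq> (0, 0)" by simp
  show ?thesis
    by (rule mpoly4.dim_unique[OF _ bihom_subset_span_chart_basis_std chart_basis_independent(2)[OF std std]])
      (auto simp: chart_basis_bihom card_image[OF chart_basis_independent(1)[OF std std]] card_grid)
qed

text \<open>A chart basis is independent and has \<open>dim (bihom i j)\<close> elements, so it spans.\<close>

lemma bihom_subset_span_chart_basis:
  fixes a b :: "'k::field \<times> 'k"
  assumes a: "a \<noteq> (0, 0)" and b: "b \<noteq> (0, 0)"
  shows "bihom i j \<subseteq> mpoly4.span (chart_basis a b i j ` grid i j)"
proof
  fix F :: "'k mpoly4" assume F: "F \<in> bihom i j"
  let ?B = "chart_basis a b i j ` grid i j"
  show "F \<in> mpoly4.span ?B"
  proof (rule ccontr)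
    assume F_notin: "F \<notin> mpoly4.span ?B"
    have indep: "mpoly4.independent (insert F ?B)"
      by (rule mpoly4.independent_insertI[OF F_notin chart_basis_independent(2)[OF a b]])
    have span: "insert F ?B \<subseteq> mpoly4.span (chart_basis (0, 1) (0, 1) i j ` grid i j)"
      using F chart_basis_bihom bihom_subset_span_chart_basis_std by blast
    have "card (insert F ?B) \<le> card (chart_basis (0, 1::'k) (0, 1) i j ` grid i j)"
      using mpoly4.independent_span_bound[OF _ indep span] by simp
    also have "\<dots> \<le> card (grid i j)"
      by (rule card_image_le) simp
    also have "\<dots> = card ?B"
      using card_image[OF chart_basis_independent(1)[OF a b]] by simp
    finally have "card (insert F ?B) \<le> card ?B" .
    moreover have "F \<notin> ?B"
      using F_notin mpoly4.span_base by blast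
    ultimately show False
      by simp
  qed
qed

lemma bihom_chart_coords:
  assumes a: "a \<noteq> (0, 0)" and b: "b \<noteq> (0, 0)" and F: "F \<in> bihom i j"
  obtains c where "F = (\<Sum>t\<in>grid i j. scale4 (c t) (chart_basis a b i j t))"
proof -
  have "F \<in> mpoly4.span (chart_basis a b i j ` grid i j)"
    using bihom_subset_span_chart_basis[OF a b] F by blast
  then obtain u where "F = (\<Sum>v\<in>chart_basis a b i j ` grid i j. scale4 (u v) v)"
    unfolding mpoly4.span_finite[OF finite_imageI[OF finite_grid]] by blast
  also have "\<dots> = (\<Sum>t\<in>grid i j. scale4 (u (chart_basis a b i j t)) (chart_basis a b i j t))"
    by (rule sum.reindex[OF chart_basis_independent(1)[OF a b], unfolded comp_def])
  finally show ?thesis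
    by (rule that)
qed

lemma coeff_coeff_chart_eq_coord:
  assumes a: "a \<noteq> (0, 0)" and b: "b \<noteq> (0, 0)"
    and F: "F = (\<Sum>t\<in>grid i j. scale4 (c t) (chart_basis a b i j t))"
    and t: "(\<alpha>, \<beta>) \<in> grid i j"
  shows "coeff (coeff (chart a b F) \<alpha>) \<beta> = c (\<alpha>, \<beta>)"
proof -
  have "chart a b F = (\<Sum>t\<in>grid i j. monom (monom (c t) (snd t)) (fst t))"
    unfolding F eval4_sum_scale4 using a b
    by (simp add: chart_chart_basis smult_const_monom_mult_monom[where g = 1, simplified])
  then show ?thesis
    using t by (simp add: coeff_coeff_sum_monom_monom)
qed

lemma inj_on_chart_bihom:
  assumes a: "a \<noteq> (0, 0)" and b: "b \<noteq> (0, 0)"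
  shows "inj_on (chart a b) (bihom i j)"
proof (rule inj_onI)
  fix F G assume F: "F \<in> bihom i j" and G: "G \<in> bihom i j" and eq: "chart a b F = chart a b G"
  obtain c where c: "F - G = (\<Sum>t\<in>grid i j. scale4 (c t) (chart_basis a b i j t))"
    using bihom_chart_coords[OF a b bihom_diff[OF F G]] by blast
  have "c t = 0" if "t \<in> grid i j" for t
    using coeff_coeff_chart_eq_coord[OF a b c, of "fst t" "snd t"] that eq by (simp add: eval4_diff)
  then have "F - G = 0"
    unfolding c by (simp add: mpoly4.scale_zero_left)
  then show "F = G"
    by simp
qed

section \<open>Dehomogenised linear forms\<close>

text \<open>In the chart centred at \<open>(0:1)\<close> the forms \<open>yform b\<close> and \<open>yform_compl b\<close> become \<open>lin_poly b\<close>
  and \<open>lin_poly_compl b\<close>. The degree of \<open>lin_poly b\<close> drops to \<open>0\<close> exactly for the point \<open>b = (1:0)\<close>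
  at infinity.\<close>

definition lin_poly :: "'k::field \<times> 'k \<Rightarrow> 'k poly" where
  "lin_poly b = [:- fst b, snd b:]"

definition lin_poly_compl :: "'k::field \<times> 'k \<Rightarrow> 'k poly" where
  "lin_poly_compl b = [:snd (compl_pt b), fst (compl_pt b):]"

lemma lin_poly_nonzero: "b \<noteq> (0, 0) \<Longrightarrow> lin_poly b \<noteq> 0"
  by (cases b) (auto simp: lin_poly_def)

lemma degree_lin_poly: "degree (lin_poly b) = (if snd b = 0 then 0 else 1)"
  by (simp add: lin_poly_def)

lemma degree_lin_poly_le: "degree (lin_poly b) \<le> 1"
  by (simp add: lin_poly_def)

lemma degree_lin_poly_compl_le: "degree (lin_poly_compl b) \<le> 1"
  by (simp add: lin_poly_compl_def)

definition comaximal :: "'a::comm_ring_1 \<Rightarrow> 'a \<Rightarrow> bool" where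
  "comaximal a b \<longleftrightarrow> (\<exists>u v. u * a + v * b = 1)"

lemma comaximal_commute: "comaximal a b \<Longrightarrow> comaximal b a"
  unfolding comaximal_def by (metis add.commute)

lemma comaximal_one_left: "comaximal 1 c"
  unfolding comaximal_def by (intro exI[of _ 1] exI[of _ 0]) simp

lemma comaximal_mult_left:
  assumes "comaximal a c" "comaximal b c"
  shows "comaximal (a * b) c"
proof -
  obtain u v u' v' where uv: "u * a + v * c = 1" and uv': "u' * b + v' * c = 1"
    using assms unfolding comaximal_def by blast
  have "(u * u') * (a * b) + (u * a * v' + v * (u' * b + v' * c)) * c =
      (u * a + v * c) * (u' * b + v' * c)"
    by (simp add: algebra_simps)
  also have "\<dots> = 1"
    using uv uv' by simp
  finally show ?thesis
    unfolding comaximal_def by blast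
qed

lemma comaximal_prod_left: "(\<And>x. x \<in> A \<Longrightarrow> comaximal (f x) c) \<Longrightarrow> comaximal (prod f A) c"
  by (induction A rule: infinite_finite_induct) (auto simp: comaximal_one_left comaximal_mult_left)

lemma comaximal_power_left: "comaximal a c \<Longrightarrow> comaximal (a ^ n) c"
  by (induction n) (simp_all add: comaximal_one_left comaximal_mult_left)

lemma comaximal_power: "comaximal a c \<Longrightarrow> comaximal (a ^ n) (c ^ m)"
  by (intro comaximal_power_left comaximal_commute[OF comaximal_power_left[OF comaximal_commute]])

lemma mult_dvd_if_comaximal:
  assumes "a dvd p" "b dvd p" "comaximal a b"
  shows "a * b dvd p"
proof -
  obtain u v where uv: "u * a + v * b = 1"
    using assms(3) unfolding comaximal_def by blast
  obtain x where x: "p = a * x"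
    using assms(1) by (elim dvdE)
  obtain y where y: "p = b * y"
    using assms(2) by (elim dvdE)
  have "p = u * a * p + v * b * p"
    by (metis uv distrib_right mult_1)
  also have "\<dots> = (a * b) * (u * y + v * x)"
    by (subst (2) x, subst (1) y) (simp add: algebra_simps)
  finally show ?thesis
    by (rule dvdI)
qed

lemma prod_dvd_if_pairwise_comaximal:
  assumes "finite A" "\<And>i. i \<in> A \<Longrightarrow> f i dvd p"
    and "\<And>i i'. i \<in> A \<Longrightarrow> i' \<in> A \<Longrightarrow> i \<noteq> i' \<Longrightarrow> comaximal (f i) (f i')"
  shows "prod f A dvd p"
  using assms
proof (induction A rule: finite_induct)
  case (insert i A)
  have "comaximal (f i) (prod f A)"
    by (rule comaximal_commute, rule comaximal_prod_left) (use insert in auto)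
  then show ?case
    using insert by (simp add: mult_dvd_if_comaximal)
qed simp

lemma comaximal_lin_poly:
  assumes "fst b * snd b' \<noteq> snd b * fst b'"
  shows "comaximal (lin_poly b) (lin_poly b')"
proof -
  define \<kappa> where "\<kappa> = snd b * fst b' - fst b * snd b'"
  have "\<kappa> \<noteq> 0"
    using assms by (simp add: \<kappa>_def)
  have "snd b' / \<kappa> * (- fst b) + (- snd b / \<kappa>) * (- fst b') =
      (snd b * fst b' - fst b * snd b') / \<kappa>"
    by (simp add: diff_divide_distrib algebra_simps)
  also have "\<dots> = 1"
    using \<open>\<kappa> \<noteq> 0\<close> by (simp add: \<kappa>_def)
  moreover have "snd b' / \<kappa> * snd b + (- snd b / \<kappa>) * snd b' = 0"
    by (simp add: algebra_simps)
  ultimately have "[:snd b' / \<kappa>:] * lin_poly b + [:- snd b / \<kappa>:] * lin_poly b' = 1"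
    using \<open>\<kappa> \<noteq> 0\<close> by (simp add: lin_poly_def one_pCons mult.commute)
  then show ?thesis
    unfolding comaximal_def by blast
qed

lemma degree_prod_lin_poly_powers:
  fixes b :: "nat \<Rightarrow> 'k::field \<times> 'k"
  assumes "\<And>l. l < s \<Longrightarrow> b l \<noteq> (0, 0)"
  shows "degree (\<Prod>l<s. lin_poly (b l) ^ e l) + (\<Sum>l\<in>{l\<in>{..<s}. snd (b l) = 0}. e l) = (\<Sum>l<s. e l)"
proof -
  have nonzero: "\<forall>l<s. lin_poly (b l) \<noteq> 0"
    using assms lin_poly_nonzero by blast
  have "degree (\<Prod>l<s. lin_poly (b l) ^ e l) = (\<Sum>l<s. degree (lin_poly (b l) ^ e l))"
    by (rule degree_prod_sum_eq) (use nonzero in simp)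
  also have "\<dots> = (\<Sum>l<s. if snd (b l) = 0 then 0 else e l)"
    using nonzero by (intro sum.cong refl) (simp add: degree_power_eq degree_lin_poly)
  moreover have "(\<Sum>l\<in>{l\<in>{..<s}. snd (b l) = 0}. e l) = (\<Sum>l<s. if snd (b l) = 0 then e l else 0)"
    by (rule sum.inter_filter) simp
  ultimately show ?thesis
    by (simp flip: sum.distrib) (rule sum.cong; simp)
qed

text \<open>After dehomogenisation the factor belonging to the point \<open>(1:0)\<close> at infinity is only
  visible as a drop in degree.\<close>

lemma degree_plus_powers_at_infinity_le:
  fixes b :: "nat \<Rightarrow> 'k::field \<times> 'k" and p :: "'k poly"
  assumes distinct: "\<And>l l'. l < s \<Longrightarrow> l' < s \<Longrightarrow> l \<noteq> l' \<Longrightarrow> fst (b l) * snd (b l') \<noteq> snd (b l) * fst (b l')"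
    and dvd: "\<And>l. l < s \<Longrightarrow> \<exists>r. p = lin_poly (b l) ^ e l * r \<and> degree r + e l \<le> j"
    and "degree p \<le> j"
  shows "degree p + (\<Sum>l\<in>{l\<in>{..<s}. snd (b l) = 0}. e l) \<le> j"
proof (cases "{l\<in>{..<s}. snd (b l) = 0} = {}")
  case True
  then show ?thesis
    unfolding True using \<open>degree p \<le> j\<close> by simp
next
  case False
  then obtain l0 where l0: "l0 < s" "snd (b l0) = 0"
    by blast
  then have at_infinity: "{l\<in>{..<s}. snd (b l) = 0} = {l0}"
    using distinct by fastforce
  obtain r0 where "p = lin_poly (b l0) ^ e l0 * r0" and "degree r0 + e l0 \<le> j"
    using dvd l0 by blast
  moreover have "degree (lin_poly (b l0) ^ e l0) = 0"
    using l0 degree_power_le[of "lin_poly (b l0)" "e l0"] by (simp add: degree_lin_poly)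
  ultimately have "degree p + e l0 \<le> j"
    using degree_mult_le[of "lin_poly (b l0) ^ e l0" r0] by simp
  then show ?thesis
    unfolding at_infinity by simp
qed

lemma prod_lin_poly_powers_dvd:
  fixes b :: "nat \<Rightarrow> 'k::field \<times> 'k" and p :: "'k poly"
  assumes nonzero: "\<And>l. l < s \<Longrightarrow> b l \<noteq> (0, 0)"
    and distinct: "\<And>l l'. l < s \<Longrightarrow> l' < s \<Longrightarrow> l \<noteq> l' \<Longrightarrow> fst (b l) * snd (b l') \<noteq> snd (b l) * fst (b l')"
    and dvd: "\<And>l. l < s \<Longrightarrow> \<exists>r. p = lin_poly (b l) ^ e l * r \<and> degree r + e l \<le> j"
    and "degree p \<le> j" and "p \<noteq> 0"
  shows "\<exists>r. p = (\<Prod>l<s. lin_poly (b l) ^ e l) * r \<and> degree r + (\<Sum>l<s. e l) \<le> j"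
proof -
  let ?G = "\<Prod>l<s. lin_poly (b l) ^ e l"
  have "?G dvd p"
  proof (rule prod_dvd_if_pairwise_comaximal)
    show "lin_poly (b l) ^ e l dvd p" if "l \<in> {..<s}" for l
      using dvd[of l] that by (auto intro: dvdI)
    show "comaximal (lin_poly (b l) ^ e l) (lin_poly (b l') ^ e l')"
      if "l \<in> {..<s}" "l' \<in> {..<s}" "l \<noteq> l'" for l l'
      using that by (intro comaximal_power comaximal_lin_poly distinct) auto
  qed simp
  then obtain r where p: "p = ?G * r"
    by (elim dvdE)
  moreover have "\<forall>l<s. lin_poly (b l) \<noteq> 0"
    using nonzero lin_poly_nonzero by blast
  then have "?G \<noteq> 0"
    by (simp add: prod_zero_iff)
  ultimately have "degree p = degree ?G + degree r"
    using \<open>p \<noteq> 0\<close> by (simp add: degree_mult_eq)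
  then show ?thesis
    using p degree_prod_lin_poly_powers[where b = b and s = s and e = e, OF nonzero]
      degree_plus_powers_at_infinity_le[where b = b and s = s and e = e, OF distinct dvd \<open>degree p \<le> j\<close>]
    by (intro exI[of _ r]) simp
qed

lemma degree_binary_form_le:
  fixes u v :: "'k::field poly"
  assumes "degree u \<le> 1" "degree v \<le> 1"
  shows "degree (\<Sum>\<beta>\<le>j. smult (c \<beta>) (u ^ \<beta> * v ^ (j - \<beta>))) \<le> j"
proof (rule degree_sum_le)
  fix \<beta> assume "\<beta> \<in> {..j}"
  have "degree (smult (c \<beta>) (u ^ \<beta> * v ^ (j - \<beta>))) \<le> degree u * \<beta> + degree v * (j - \<beta>)"
    by (rule order_trans[OF degree_smult_le
          order_trans[OF degree_mult_le add_mono[OF degree_power_le degree_power_le]]])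
  also have "\<dots> \<le> 1 * \<beta> + 1 * (j - \<beta>)"
    using assms by (intro add_mono mult_right_mono) simp_all
  finally show "degree (smult (c \<beta>) (u ^ \<beta> * v ^ (j - \<beta>))) \<le> j"
    using \<open>\<beta> \<in> {..j}\<close> by simp
qed simp

lemma binary_form_factor_power:
  fixes u v :: "'k::field poly"
  assumes "e \<le> j" and c: "\<And>\<beta>. \<beta> < e \<Longrightarrow> c \<beta> = 0"
  shows "(\<Sum>\<beta>\<le>j. smult (c \<beta>) (u ^ \<beta> * v ^ (j - \<beta>))) =
    u ^ e * (\<Sum>\<beta>\<le>j - e. smult (c (\<beta> + e)) (u ^ \<beta> * v ^ (j - e - \<beta>)))"
proof -
  have "(\<Sum>\<beta>\<le>j. smult (c \<beta>) (u ^ \<beta> * v ^ (j - \<beta>))) =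
      (\<Sum>\<beta>\<in>{e..j}. smult (c \<beta>) (u ^ \<beta> * v ^ (j - \<beta>)))"
    by (rule sum.mono_neutral_right) (auto simp: c)
  also have "\<dots> = (\<Sum>\<beta>=0..j - e. smult (c (\<beta> + e)) (u ^ (\<beta> + e) * v ^ (j - (\<beta> + e))))"
    using sum.atLeastAtMost_shift_bounds[of "\<lambda>\<beta>. smult (c \<beta>) (u ^ \<beta> * v ^ (j - \<beta>))" 0 e "j - e"]
      assms(1) by (simp add: add.commute)
  also have "\<dots> = u ^ e * (\<Sum>\<beta>\<le>j - e. smult (c (\<beta> + e)) (u ^ \<beta> * v ^ (j - e - \<beta>)))"
    unfolding sum_distrib_left atLeast0AtMost
    by (intro sum.cong refl) (simp add: power_add mult_ac add.commute)
  finally show ?thesis .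
qed

section \<open>Fat points on a line \<open>R\<^sub>1 \<times> \<P>\<^sup>1\<close>\<close>

lemma sum_grid_fst_eq:
  "(\<Sum>t\<in>grid i j. if fst t = k then g t else 0) = (if k \<le> i then (\<Sum>\<beta>\<le>j. g (k, \<beta>)) else 0)"
proof -
  have "(\<Sum>t\<in>grid i j. if fst t = k then g t else 0) = (\<Sum>\<alpha>\<le>i. \<Sum>\<beta>\<le>j. if \<alpha> = k then g (\<alpha>, \<beta>) else 0)"
    unfolding grid_def sum.cartesian_product by (intro sum.cong refl) auto
  also have "\<dots> = (\<Sum>\<beta>\<le>j. \<Sum>\<alpha>\<le>i. if \<alpha> = k then g (\<alpha>, \<beta>) else 0)"
    by (rule sum.swap)
  also have "\<dots> = (if k \<le> i then (\<Sum>\<beta>\<le>j. g (k, \<beta>)) else 0)"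
    by (simp add: sum.delta)
  finally show ?thesis .
qed

locale fat_points_on_line =
  fixes R1 :: "'k::field \<times> 'k" and Q :: "nat \<Rightarrow> 'k \<times> 'k" and mult :: "nat \<Rightarrow> nat" and s :: nat
  assumes R1_nonzero: "R1 \<noteq> (0, 0)"
    and Q_nonzero: "\<And>l. l < s \<Longrightarrow> Q l \<noteq> (0, 0)"
    and Q_distinct: "\<And>l l'. l < s \<Longrightarrow> l' < s \<Longrightarrow> l \<noteq> l' \<Longrightarrow> fst (Q l) * snd (Q l') \<noteq> snd (Q l) * fst (Q l')"
begin

definition IZ :: "'k mpoly4 set" where
  "IZ = fat_ideal s (\<lambda>l. (R1, Q l)) mult"

text \<open>Truncated subtraction realises \<open>(m\<^sub>l - h)\<^sub>+\<close>. \<open>yfactor k\<close> is the form \<open>G\<^sub>k\<close> of the overview.\<close>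

definition a_seq :: "nat \<Rightarrow> nat" where
  "a_seq h = (\<Sum>l<s. mult l - h)"

definition yfactor :: "nat \<Rightarrow> 'k mpoly4" where
  "yfactor k = (\<Prod>l<s. yform (Q l) ^ (mult l - k))"

definition yfactor_poly :: "nat \<Rightarrow> 'k poly" where
  "yfactor_poly k = (\<Prod>l<s. lin_poly (Q l) ^ (mult l - k))"

definition ideal_basis :: "nat \<Rightarrow> nat \<Rightarrow> nat \<times> nat \<Rightarrow> 'k mpoly4" where
  "ideal_basis i j t = xform R1 ^ fst t * xform_compl R1 ^ (i - fst t) * yfactor (fst t) *
    V 2 ^ snd t * V 3 ^ (j - a_seq (fst t) - snd t)"

definition basis_rows :: "nat \<Rightarrow> nat \<Rightarrow> nat set" where
  "basis_rows i j = {k. k \<le> i \<and> a_seq k \<le> j}"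

definition basis_index :: "nat \<Rightarrow> nat \<Rightarrow> (nat \<times> nat) set" where
  "basis_index i j = Sigma (basis_rows i j) (\<lambda>k. {..j - a_seq k})"

abbreviation affine_chart :: "'k mpoly4 \<Rightarrow> 'k poly poly" where
  "affine_chart \<equiv> chart R1 (0, 1)"

lemma affine_chart_yform: "affine_chart (yform b) = [:lin_poly b:]"
  by (simp add: chart_yform compl_pt_std lin_poly_def)

lemma affine_chart_V2: "affine_chart (V 2) = varY"
  by (simp add: eval4_V chart_subst_def compl_pt_std varY_def)

lemma affine_chart_V3: "affine_chart (V 3) = 1"
  by (simp add: eval4_V chart_subst_def compl_pt_std one_pCons)

lemma affine_chart_yfactor: "affine_chart (yfactor k) = [:yfactor_poly k:]"
  by (simp add: yfactor_def yfactor_poly_def eval4_prod eval4_power affine_chart_yform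
      poly_const_pow prod_to_poly)

lemma affine_chart_ideal_basis:
  "affine_chart (ideal_basis i j t) = monom (yfactor_poly (fst t) * monom 1 (snd t)) (fst t)"
proof -
  have "affine_chart (ideal_basis i j t) = monom 1 (fst t) * [:yfactor_poly (fst t):] * [:monom 1 (snd t):]"
    using R1_nonzero
    by (simp add: ideal_basis_def eval4_mult eval4_power chart_xform chart_xform_compl
        affine_chart_yfactor affine_chart_V2 affine_chart_V3 varX_power varY_power)
  also have "\<dots> = monom (yfactor_poly (fst t) * monom 1 (snd t)) (fst t)"
    by (simp add: monom_mult_const monom_0[symmetric] mult_monom)
  finally show ?thesis .
qed

lemma affine_chart_chart_basis:
  "affine_chart (chart_basis R1 b i j t) = monom (lin_poly b ^ snd t * lin_poly_compl b ^ (j - snd t)) (fst t)"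
proof -
  have "affine_chart (chart_basis R1 b i j t) =
      monom 1 (fst t) * [:lin_poly b ^ snd t:] * [:lin_poly_compl b ^ (j - snd t):]"
    using R1_nonzero
    by (simp add: chart_basis_def eval4_mult eval4_power chart_xform chart_xform_compl affine_chart_yform
        chart_yform_compl compl_pt_std lin_poly_compl_def varX_power poly_const_pow)
  also have "\<dots> = monom (lin_poly b ^ snd t * lin_poly_compl b ^ (j - snd t)) (fst t)"
    by (simp add: monom_0[symmetric] mult_monom)
  finally show ?thesis .
qed

lemma yfactor_poly_nonzero: "yfactor_poly k \<noteq> 0"
proof -
  have "\<forall>l<s. lin_poly (Q l) \<noteq> 0"
    using Q_nonzero lin_poly_nonzero by blast
  then show ?thesis
    unfolding yfactor_poly_def by (simp add: prod_zero_iff)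
qed

lemma yfactor_bihom: "yfactor k \<in> bihom 0 (a_seq k)"
  unfolding yfactor_def a_seq_def
  by (rule bihom_prod) (use bihom_power[OF bihom_yform] in simp)

lemma ideal_basis_bihom:
  assumes "t \<in> basis_index i j"
  shows "ideal_basis i j t \<in> bihom i j"
proof -
  obtain k q where kq: "t = (k, q)" and k: "k \<le> i" "a_seq k \<le> j" and q: "q \<le> j - a_seq k"
    using assms by (cases t) (auto simp: basis_index_def basis_rows_def)
  have "xform R1 ^ k \<in> bihom k 0" "xform_compl R1 ^ (i - k) \<in> bihom (i - k) 0"
    "V 2 ^ q \<in> bihom 0 q" "V 3 ^ (j - a_seq k - q) \<in> bihom 0 (j - a_seq k - q)"
    using bihom_power[OF bihom_xform, of R1 k] bihom_power[OF bihom_xform_compl, of R1 "i - k"]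
      bihom_power[OF bihom_V_y, of 2 q] bihom_power[OF bihom_V_y, of 3 "j - a_seq k - q"]
    by simp_all
  then have "ideal_basis i j t \<in> bihom (k + (i - k) + 0 + 0 + 0) (0 + 0 + a_seq k + q + (j - a_seq k - q))"
    unfolding ideal_basis_def kq fst_conv snd_conv by (intro bihom_mult yfactor_bihom)
  then show ?thesis
    using k q by simp
qed

text \<open>The factor \<open>xform R1 ^ k * yform (Q l) ^ (mult l - k)\<close> alone already lies in the
  \<open>mult l\<close>-th power of the point ideal.\<close>

lemma ideal_basis_in_ideal_pow:
  assumes l: "l < s"
  shows "ideal_basis i j t \<in> ideal_pow (pt_ideal (R1, Q l)) (mult l)"
proof -
  obtain k q where kq: "t = (k, q)" by (cases t)
  define others where "others = (\<Prod>l'\<in>{..<s} - {l}. yform (Q l') ^ (mult l' - k))"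
  have "yfactor k = yform (Q l) ^ (mult l - k) * others"
    unfolding yfactor_def others_def using l by (simp add: prod.remove)
  then have "ideal_basis i j t =
      (xform_compl R1 ^ (i - k) * others * V 2 ^ q * V 3 ^ (j - a_seq k - q)) *
      (xform R1 ^ k * yform (Q l) ^ (mult l - k))"
    unfolding ideal_basis_def kq fst_conv snd_conv by (simp add: mult_ac)
  moreover have "xform_compl R1 ^ (i - k) * others * V 2 ^ q * V 3 ^ (j - a_seq k - q) \<in> R4"
    unfolding others_def
    by (intro R4_mult R4_power R4_prod R4_V subsetD[OF bihom_subset_R4 bihom_xform_compl]
        subsetD[OF bihom_subset_R4 bihom_yform]) simp_all
  moreover have "xform R1 ^ k * yform (Q l) ^ (mult l - k) \<in> ideal_pow (pt_ideal (R1, Q l)) (mult l)"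
    using pt_ideal_subset_R4[of R1 "Q l"]
    by (intro power_mult_power_in_ideal_pow) (auto simp: pt_ideal_eq ideal_gen_base)
  ultimately show ?thesis
    unfolding ideal_pow_def by (simp add: ideal_gen_mult)
qed

lemma ideal_basis_in_IZ: "t \<in> basis_index i j \<Longrightarrow> ideal_basis i j t \<in> IZ"
  unfolding IZ_def fat_ideal_def
  using ideal_basis_in_ideal_pow ideal_basis_bihom bihom_subset_R4 by blast

lemma finite_basis_rows: "finite (basis_rows i j)"
  by (rule finite_subset[of _ "{..i}"]) (auto simp: basis_rows_def)

lemma finite_basis_index: "finite (basis_index i j)"
  by (simp add: basis_index_def finite_basis_rows)

lemma ideal_basis_independent:
  shows "inj_on (ideal_basis i j) (basis_index i j)"
    and "mpoly4.independent (ideal_basis i j ` basis_index i j)"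
  by (rule independent_if_eval4_monomial_images[where \<sigma> = "chart_subst R1 (0, 1)" and G = yfactor_poly];
      simp add: finite_basis_index affine_chart_ideal_basis yfactor_poly_nonzero)+

lemma coeff_const_mult_monom: "coeff ([:[:c:]:] * monom p a) k = (if a = k then smult c p else 0)"
  by (simp add: smult_monom coeff_monom)

lemma coeff_affine_chart_chart_coords:
  assumes "F = (\<Sum>t\<in>grid i j. scale4 (c t) (chart_basis R1 b i j t))"
  shows "coeff (affine_chart F) k =
    (if k \<le> i then (\<Sum>\<beta>\<le>j. smult (c (k, \<beta>)) (lin_poly b ^ \<beta> * lin_poly_compl b ^ (j - \<beta>))) else 0)"
  unfolding assms eval4_sum_scale4 affine_chart_chart_basis coeff_sum coeff_const_mult_monom
  by (simp only: sum_grid_fst_eq snd_conv)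

lemma coeff_affine_chart_bihom:
  assumes "F \<in> bihom i j"
  shows coeff_affine_chart_eq_0: "i < k \<Longrightarrow> coeff (affine_chart F) k = 0"
    and degree_coeff_affine_chart: "degree (coeff (affine_chart F) k) \<le> j"
proof -
  have std: "(0, 1::'k) \<noteq> (0, 0)" by simp
  obtain c where "F = (\<Sum>t\<in>grid i j. scale4 (c t) (chart_basis R1 (0, 1) i j t))"
    using bihom_chart_coords[OF R1_nonzero std assms] by blast
  note coeff = coeff_affine_chart_chart_coords[OF this, of k]
  show "i < k \<Longrightarrow> coeff (affine_chart F) k = 0"
    using coeff by simp
  show "degree (coeff (affine_chart F) k) \<le> j"
    unfolding coeff
    using degree_binary_form_le[OF degree_lin_poly_le degree_lin_poly_compl_le, where c = "\<lambda>\<beta>. c (k, \<beta>)"]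
    by simp
qed

text \<open>Expand \<open>F\<close> in the chart centred at \<open>R1 \<times> Q l\<close>: by \<open>chart_ideal_pow_pt_ideal\<close>, the
  coordinates of \<open>X\<^sup>k Y\<^sup>\<beta>\<close> vanish for \<open>k + \<beta> < mult l\<close>.\<close>

lemma coeff_affine_chart_dvd_lin_poly_power:
  assumes F: "F \<in> IZ" "F \<in> bihom i j" and l: "l < s" and nonzero: "coeff (affine_chart F) k \<noteq> 0"
  shows "\<exists>r. coeff (affine_chart F) k = lin_poly (Q l) ^ (mult l - k) * r \<and> degree r + (mult l - k) \<le> j"
proof -
  have k: "k \<le> i"
    using coeff_affine_chart_eq_0[OF F(2)] nonzero by (meson not_le)
  obtain c where Fc: "F = (\<Sum>t\<in>grid i j. scale4 (c t) (chart_basis R1 (Q l) i j t))"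
    using bihom_chart_coords[OF R1_nonzero Q_nonzero[OF l] F(2)] by blast
  let ?form = "\<lambda>j c. \<Sum>\<beta>\<le>j. smult (c \<beta>) (lin_poly (Q l) ^ \<beta> * lin_poly_compl (Q l) ^ (j - \<beta>))"
  have coeff: "coeff (affine_chart F) k = ?form j (\<lambda>\<beta>. c (k, \<beta>))"
    using coeff_affine_chart_chart_coords[OF Fc, of k] k by simp
  have "chart R1 (Q l) F \<in> origin_ideal_pow (mult l)"
    using F(1) l unfolding IZ_def fat_ideal_def
    by (intro chart_ideal_pow_pt_ideal R1_nonzero Q_nonzero) auto
  then have c0: "c (k, \<beta>) = 0" if "\<beta> < mult l - k" "\<beta> \<le> j" for \<beta>
    using that k coeff_coeff_chart_eq_coord[OF R1_nonzero Q_nonzero[OF l] Fc, of k \<beta>]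
    by (auto simp: origin_ideal_pow_def grid_def)
  have "mult l - k \<le> j"
  proof (rule ccontr)
    assume "\<not> mult l - k \<le> j"
    then have "coeff (affine_chart F) k = 0"
      unfolding coeff using c0 by simp
    then show False
      using nonzero by contradiction
  qed
  define r where "r = ?form (j - (mult l - k)) (\<lambda>\<beta>. c (k, \<beta> + (mult l - k)))"
  have "coeff (affine_chart F) k = lin_poly (Q l) ^ (mult l - k) * r"
    unfolding coeff r_def
    by (rule binary_form_factor_power) (use c0 \<open>mult l - k \<le> j\<close> in auto)
  moreover have "degree r \<le> j - (mult l - k)"
    unfolding r_def by (rule degree_binary_form_le[OF degree_lin_poly_le degree_lin_poly_compl_le])
  then have "degree r + (mult l - k) \<le> j"
    using \<open>mult l - k \<le> j\<close> by linarith
  ultimately show ?thesis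
    by blast
qed

lemma coeff_affine_chart_dvd_yfactor_poly:
  assumes "F \<in> IZ" "F \<in> bihom i j" and nonzero: "coeff (affine_chart F) k \<noteq> 0"
  shows "\<exists>r. coeff (affine_chart F) k = yfactor_poly k * r \<and> degree r + a_seq k \<le> j"
  unfolding yfactor_poly_def a_seq_def
proof (rule prod_lin_poly_powers_dvd)
  show "\<exists>r. coeff (affine_chart F) k = lin_poly (Q l) ^ (mult l - k) * r \<and> degree r + (mult l - k) \<le> j"
    if "l < s" for l
    by (rule coeff_affine_chart_dvd_lin_poly_power[OF assms(1,2) that nonzero])
qed (use Q_nonzero Q_distinct degree_coeff_affine_chart[OF assms(2)] nonzero in auto)

lemma coeff_affine_chart_sum_ideal_basis:
  "coeff (affine_chart (\<Sum>t\<in>basis_index i j. scale4 (c t) (ideal_basis i j t))) k =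
    (if k \<in> basis_rows i j then yfactor_poly k * (\<Sum>q\<le>j - a_seq k. monom (c (k, q)) q) else 0)"
proof -
  let ?f = "\<lambda>t. if fst t = k then yfactor_poly (fst t) * monom (c t) (snd t) else 0"
  have "coeff (affine_chart (\<Sum>t\<in>basis_index i j. scale4 (c t) (ideal_basis i j t))) k =
      (\<Sum>t\<in>basis_index i j. ?f t)"
    unfolding eval4_sum_scale4 affine_chart_ideal_basis coeff_sum
    by (simp add: smult_const_monom_mult_monom coeff_monom)
  also have "\<dots> = (\<Sum>k'\<in>basis_rows i j. \<Sum>q\<le>j - a_seq k'. ?f (k', q))"
    unfolding basis_index_def by (subst sum.Sigma) (auto simp: finite_basis_rows intro!: sum.cong)
  also have "\<dots> = (\<Sum>k'\<in>basis_rows i j. if k' = k then (\<Sum>q\<le>j - a_seq k. yfactor_poly k * monom (c (k, q)) q) else 0)"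
    by (intro sum.cong refl) simp
  also have "\<dots> = (if k \<in> basis_rows i j then yfactor_poly k * (\<Sum>q\<le>j - a_seq k. monom (c (k, q)) q) else 0)"
    by (simp add: sum.delta finite_basis_rows sum_distrib_left)
  finally show ?thesis .
qed

lemma IZ_subset_span_ideal_basis: "IZ \<inter> bihom i j \<subseteq> mpoly4.span (ideal_basis i j ` basis_index i j)"
proof
  fix F assume "F \<in> IZ \<inter> bihom i j"
  then have F: "F \<in> IZ" "F \<in> bihom i j" by auto
  define p where "p k = coeff (affine_chart F) k" for k
  have "\<exists>r. p k = yfactor_poly k * r \<and> (r \<noteq> 0 \<longrightarrow> k \<in> basis_rows i j \<and> degree r \<le> j - a_seq k)" for k
  proof (cases "p k = 0")
    case False
    then obtain r where r: "p k = yfactor_poly k * r" "degree r + a_seq k \<le> j"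
      using coeff_affine_chart_dvd_yfactor_poly[OF F] unfolding p_def by blast
    moreover have "k \<le> i"
      using False coeff_affine_chart_eq_0[OF F(2)] unfolding p_def by (meson not_le)
    ultimately show ?thesis
      by (intro exI[of _ r]) (auto simp: basis_rows_def)
  qed (rule exI[of _ 0], simp)
  then obtain r where r: "\<And>k. p k = yfactor_poly k * r k"
    and r_nonzero: "\<And>k. r k \<noteq> 0 \<Longrightarrow> k \<in> basis_rows i j \<and> degree (r k) \<le> j - a_seq k"
    by metis
  define F' where "F' = (\<Sum>t\<in>basis_index i j. scale4 (coeff (r (fst t)) (snd t)) (ideal_basis i j t))"
  have "coeff (affine_chart F') k = p k" for k
  proof (cases "r k = 0")
    case False
    then have "(\<Sum>q\<le>j - a_seq k. monom (coeff (r k) q) q) = r k"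
      using r_nonzero by (simp add: poly_as_sum_of_monoms')
    then show ?thesis
      unfolding F'_def coeff_affine_chart_sum_ideal_basis using r r_nonzero False by simp
  qed (simp add: F'_def coeff_affine_chart_sum_ideal_basis r)
  then have "affine_chart F' = affine_chart F"
    unfolding p_def by (simp add: poly_eqI)
  moreover have "F' \<in> bihom i j"
    unfolding F'_def by (intro bihom_sum bihom_scale4 ideal_basis_bihom)
  ultimately have "F = F'"
    using inj_on_chart_bihom[OF R1_nonzero, of "(0, 1)" i j] F(2) by (simp add: inj_on_def)
  then show "F \<in> mpoly4.span (ideal_basis i j ` basis_index i j)"
    unfolding F'_def by (simp add: mpoly4.span_sum mpoly4.span_scale mpoly4.span_base)
qed

lemma dim_IZ_bihom: "mpoly4.dim (IZ \<inter> bihom i j) = card (basis_index i j)"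
  by (rule mpoly4.dim_unique[OF _ IZ_subset_span_ideal_basis ideal_basis_independent(2)])
    (auto simp: ideal_basis_in_IZ ideal_basis_bihom card_image[OF ideal_basis_independent(1)])

lemma card_basis_index: "card (basis_index i j) = (\<Sum>k\<le>i. j + 1 - a_seq k)"
proof -
  have "card (basis_index i j) = (\<Sum>k\<in>basis_rows i j. j + 1 - a_seq k)"
    unfolding basis_index_def using finite_basis_rows
    by (simp add: card_SigmaI) (rule sum.cong, auto simp: basis_rows_def)
  also have "\<dots> = (\<Sum>k\<in>{..i}. if a_seq k \<le> j then j + 1 - a_seq k else 0)"
    unfolding basis_rows_def by (simp add: sum.inter_filter[symmetric] atMost_def conj_commute)
  also have "\<dots> = (\<Sum>k\<le>i. j + 1 - a_seq k)"
    by (intro sum.cong refl) simp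
  finally show ?thesis .
qed

lemma hilb_fat_eq_sum_min: "hilb_fat s (\<lambda>l. (R1, Q l)) mult i j = (\<Sum>k\<le>i. min (j + 1) (a_seq k))"
proof -
  have "(\<Sum>k\<le>i. min (j + 1) (a_seq k)) + card (basis_index i j) = (\<Sum>k\<le>i. j + 1)"
    unfolding card_basis_index sum.distrib[symmetric] by (intro sum.cong refl) simp
  then show ?thesis
    unfolding hilb_fat_def dim_bihom dim_IZ_bihom[unfolded IZ_def] by simp
qed

end

theorem theorem2p2:
  fixes R1 :: "'k::alg_closed_field \<times> 'k"
    and Q :: "nat \<Rightarrow> 'k \<times> 'k"
    and mult :: "nat \<Rightarrow> nat"
    and s :: nat
  assumes "s \<ge> 1"
    and "proj_pt R1"
    and "\<And>j. j < s \<Longrightarrow> proj_pt (Q j)"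
    and "\<And>j l. j < s \<Longrightarrow> l < s \<Longrightarrow> j \<noteq> l \<Longrightarrow> \<not> proj_eq (Q j) (Q l)"
    and "\<And>j. j < s \<Longrightarrow> mult j > 0"
  shows "let m = Max (mult ` {..<s});
             a = (\<lambda>h. \<Sum>j<s. mult j - h)
         in \<forall>i j. hilb_fat s (\<lambda>l. (R1, Q l)) mult i j
                 = (\<Sum>h = 0..min i (m - 1). min (j + 1) (a h))"
proof -
  interpret fat_points_on_line R1 Q mult s
    using assms(2-4) by unfold_locales (auto simp: proj_pt_def proj_eq_def)
  define m where "m = Max (mult ` {..<s})"
  have mult_le_m: "mult l \<le> m" if "l < s" for l
    unfolding m_def using that by (intro Max_ge) auto
  have "0 < m"
    using mult_le_m[of 0] assms(1,5) by fastforce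
  have "a_seq h = 0" if "m \<le> h" for h
    unfolding a_seq_def using mult_le_m that by (intro sum.neutral) fastforce
  then have "(\<Sum>k\<le>i. min (j + 1) (a_seq k)) = (\<Sum>h = 0..min i (m - 1). min (j + 1) (a_seq h))" for i j
    using \<open>0 < m\<close> by (intro sum.mono_neutral_right) auto
  then show ?thesis
    unfolding Let_def m_def[symmetric] by (simp add: hilb_fat_eq_sum_min a_seq_def)
qed

end
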